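(* Let $(M,d)$ be a bounded metric space with $(p,q)$-URNS for some $p>0$ and $0<q<1$, such that $\mathcal A(M)$ is compact. Let $\mathcal F$ be a family of interlaced orbit-nonexpansive self-mappings of $M$. Then there exists $x\in M$ with $Tx=x$ for all $T\in\mathcal F$.
   Context: For a metric space $(M,d)$, a mapping $T:M\to M$ and $x\in M$, the orbit of $x$ is $o_T(x)=\{x\}\cup\{T^nx:n\in\mathbb N\}$. For $x\in M$ and bounded $A\subseteq M$, $D(x,A)=\sup\{d(x,a):a\in A\}$ and $\delta(A)=\sup\{d(x,y):x,y\in A\}$. A family $\mathcal F$ of self-mappings of a bounded metric space $M$ is a family of interlaced orbit-nonexpansive mappings if $d(Tx,Sy)\le\sup\{D(x,o_R(y)):R\in\mathcal F\}$ for all $T,S\in\mathcal F$ and $x,y\in M$. A subset of $M$ is admissible if it is an intersection of closed balls of $M$; $\mathcal A(M)$ denotes the family of admissible sets. $\mathcal A(M)$ is compact if every subfamily of $\mathcal A(M)$ all of whose finite intersections are nonempty has nonempty intersection. For $A\subseteq M$ and $r>0$, $B[A,r]=\bigcap_{x\in A}B(x,r)=\{y\in M: D(y,A)\le r\}$, where $B(x,r)$ is the closed ball. $(M,d)$ has $(p,q)$-URNS if $B[A,p\,\delta(A)]\cap B\big[B[A,p\,\delta(A)],\,q\,\delta(A)\big]\neq\emptyset$ for every $A\in\mathcal A(M)$ with $\delta(A)>0$. *)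

theory Defs
  imports "HOL-Analysis.Analysis"
begin

definition orbit :: "('a \<Rightarrow> 'a) \<Rightarrow> 'a \<Rightarrow> 'a set" where
  "orbit T x = insert x {(T ^^ n) x | n. n \<ge> 1}"

definition Dsup :: "('a \<Rightarrow> 'a \<Rightarrow> real) \<Rightarrow> 'a \<Rightarrow> 'a set \<Rightarrow> real" where
  "Dsup d x A = (SUP a\<in>A. d x a)"

definition diam_d :: "('a \<Rightarrow> 'a \<Rightarrow> real) \<Rightarrow> 'a set \<Rightarrow> real" where
  "diam_d d A = (SUP xy\<in>A \<times> A. d (fst xy) (snd xy))"

definition admissible :: "'a set \<Rightarrow> ('a \<Rightarrow> 'a \<Rightarrow> real) \<Rightarrow> 'a set \<Rightarrow> bool" where
  "admissible M d A \<longleftrightarrow>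
     (\<exists>\<B>. \<B> \<subseteq> {Metric_space.mcball M d x r | x r. x \<in> M} \<and> A = M \<inter> \<Inter>\<B>)"

definition admissible_compact :: "'a set \<Rightarrow> ('a \<Rightarrow> 'a \<Rightarrow> real) \<Rightarrow> bool" where
  "admissible_compact M d \<longleftrightarrow>
     (\<forall>\<C>. \<C> \<subseteq> Collect (admissible M d) \<longrightarrow>
        (\<forall>\<G>. finite \<G> \<and> \<G> \<subseteq> \<C> \<longrightarrow> M \<inter> \<Inter>\<G> \<noteq> {}) \<longrightarrow> M \<inter> \<Inter>\<C> \<noteq> {})"

definition Bset :: "'a set \<Rightarrow> ('a \<Rightarrow> 'a \<Rightarrow> real) \<Rightarrow> 'a set \<Rightarrow> real \<Rightarrow> 'a set" where
  "Bset M d A r = M \<inter> (\<Inter>x\<in>A. Metric_space.mcball M d x r)"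

definition URNS :: "'a set \<Rightarrow> ('a \<Rightarrow> 'a \<Rightarrow> real) \<Rightarrow> real \<Rightarrow> real \<Rightarrow> bool" where
  "URNS M d p q \<longleftrightarrow>
     (\<forall>A. admissible M d A \<and> diam_d d A > 0 \<longrightarrow>
        Bset M d A (p * diam_d d A) \<inter>
        Bset M d (Bset M d A (p * diam_d d A)) (q * diam_d d A) \<noteq> {})"

definition interlaced_orbit_nonexpansive ::
  "'a set \<Rightarrow> ('a \<Rightarrow> 'a \<Rightarrow> real) \<Rightarrow> ('a \<Rightarrow> 'a) set \<Rightarrow> bool" where
  "interlaced_orbit_nonexpansive M d F \<longleftrightarrow>
     (\<forall>T\<in>F. T ` M \<subseteq> M) \<and>
     (\<forall>T\<in>F. \<forall>S\<in>F. \<forall>x\<in>M. \<forall>y\<in>M.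
        d (T x) (S y) \<le> (SUP R\<in>F. Dsup d x (orbit R y)))"

end

theory Submission
  imports Defs
begin

text \<open>Call an admissible invariant set \<open>D\<close> centred within \<open>s\<close> if some point of \<open>D\<close> lies within \<open>s\<close>
  of all of \<open>D\<close>. By Zorn's lemma and the compactness of the admissible sets there are minimal
  such sets, and minimality forces them into the admissible hull of their images; for such a set
  \<open>K\<close> the interlacing condition makes every ball \<open>B[K, r]\<close> invariant. If \<open>\<delta> = \<delta>(K) > 0\<close>,
  URNS yields a set centred within \<open>q\<delta>\<close> inside \<open>B[K, p\<delta>]\<close>; passing to its set of centres and
  minimising again gives such a \<open>K' \<subseteq> B[K, p\<delta>]\<close> with \<open>\<delta>(K') \<le> q\<delta>\<close>. Iterating, the balls
  \<open>B[K\<^sub>n, \<rho>\<^sub>n]\<close> with geometrically decreasing radii form a decreasing chain of nonempty invariant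
  admissible sets, and a common point \<open>x\<close> satisfies \<open>d(x, Tx) \<le> 2\<rho>\<^sub>n\<close> for all \<open>n\<close>.\<close>

lemma subset_Zorn_minimal:
  assumes "A \<noteq> {}"
    and "\<And>C. C \<subseteq> A \<Longrightarrow> C \<noteq> {} \<Longrightarrow> chain\<^sub>\<subseteq> C \<Longrightarrow> \<exists>L\<in>A. \<forall>X\<in>C. L \<subseteq> X"
  shows "\<exists>m\<in>A. \<forall>X\<in>A. X \<subseteq> m \<longrightarrow> X = m"
proof (rule predicate_Zorn)
  show "partial_order_on A (relation_of (\<lambda>X Y. Y \<subseteq> X) A)"
    by (auto simp: partial_order_on_def preorder_on_def refl_on_def trans_on_def
        antisym_on_def relation_of_def)
next
  fix C assume C: "C \<in> Chains (relation_of (\<lambda>X Y. Y \<subseteq> X) A)"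
  show "\<exists>u\<in>A. \<forall>X\<in>C. u \<subseteq> X"
  proof (cases "C = {}")
    case True
    then show ?thesis using assms(1) by blast
  next
    case False
    moreover have "C \<subseteq> A" and "chain\<^sub>\<subseteq> C"
      using C by (auto simp: Chains_def relation_of_def chain_subset_def)
    ultimately show ?thesis using assms(2) by blast
  qed
qed

lemma decseq_chain_subset_range:
  fixes W :: "nat \<Rightarrow> 'a set"
  assumes "decseq W"
  shows "chain\<^sub>\<subseteq> (range W)"
  unfolding chain_subset_def
proof (intro ballI)
  fix A B assume "A \<in> range W" and "B \<in> range W"
  then obtain i j where "A = W i" and "B = W j" by blast
  then show "A \<subseteq> B \<or> B \<subseteq> A"
    using decseqD[OF assms] nat_le_linear[of i j] by blast
qed

lemma orbit_subset:
  assumes "R ` A \<subseteq> A" and "y \<in> A"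
  shows "orbit R y \<subseteq> A"
proof -
  have "(R ^^ n) y \<in> A" for n
    by (induction n) (use assms in auto)
  then show ?thesis
    unfolding orbit_def using assms(2) by auto
qed

lemma diam_d_le:
  assumes "A \<noteq> {}" and "\<And>a b. a \<in> A \<Longrightarrow> b \<in> A \<Longrightarrow> d a b \<le> c"
  shows "diam_d d A \<le> c"
  unfolding diam_d_def using assms by (intro cSUP_least) auto

context Metric_space
begin

lemma diam_d_ge:
  assumes "mbounded A" and "a \<in> A" and "b \<in> A"
  shows "d a b \<le> diam_d d A"
proof -
  obtain B where "\<forall>x\<in>A. \<forall>y\<in>A. d x y \<le> B"
    using assms(1) unfolding mbounded_alt by blast
  then have "bdd_above ((\<lambda>xy. d (fst xy) (snd xy)) ` (A \<times> A))"
    by (intro bdd_aboveI[of _ B]) auto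
  then show ?thesis
    unfolding diam_d_def using cSUP_upper[of "(a, b)" "A \<times> A"] assms(2,3) by fastforce
qed

lemma admissible_subset: "admissible M d A \<Longrightarrow> A \<subseteq> M"
  unfolding admissible_def by auto

lemma admissible_Inter:
  assumes "\<And>A. A \<in> \<A> \<Longrightarrow> admissible M d A"
  shows "admissible M d (M \<inter> \<Inter>\<A>)"
proof -
  have "\<forall>A\<in>\<A>. \<exists>\<B>. \<B> \<subseteq> {mcball x r |x r. x \<in> M} \<and> A = M \<inter> \<Inter>\<B>"
    using assms unfolding admissible_def by simp
  then obtain \<B> where \<B>: "\<forall>A\<in>\<A>. \<B> A \<subseteq> {mcball x r |x r. x \<in> M} \<and> A = M \<inter> \<Inter>(\<B> A)"
    by (rule bchoice[THEN exE])
  have balls: "\<B> A \<subseteq> {mcball x r |x r. x \<in> M}" and eq: "A = M \<inter> \<Inter>(\<B> A)" if "A \<in> \<A>" for A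
    using bspec[OF \<B> that] by (rule conjunct1, rule conjunct2)
  have "M \<inter> \<Inter>\<A> = M \<inter> \<Inter>(\<Union>A\<in>\<A>. \<B> A)"
  proof (intro equalityI subsetI)
    fix z assume z: "z \<in> M \<inter> \<Inter>\<A>"
    have "z \<in> b" if "A \<in> \<A>" and "b \<in> \<B> A" for A b
    proof -
      have "z \<in> A" using z that(1) by blast
      also have "A = M \<inter> \<Inter>(\<B> A)" using that(1) by (rule eq)
      finally show ?thesis using that(2) by blast
    qed
    then show "z \<in> M \<inter> \<Inter>(\<Union>A\<in>\<A>. \<B> A)" using z by blast
  next
    fix z assume z: "z \<in> M \<inter> \<Inter>(\<Union>A\<in>\<A>. \<B> A)"
    have "z \<in> A" if "A \<in> \<A>" for A
    proof -
      have "z \<in> M \<inter> \<Inter>(\<B> A)" using z that by blast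
      also have "M \<inter> \<Inter>(\<B> A) = A" using eq[OF that] by (rule sym)
      finally show ?thesis .
    qed
    then show "z \<in> M \<inter> \<Inter>\<A>" using z by blast
  qed
  moreover have "(\<Union>A\<in>\<A>. \<B> A) \<subseteq> {mcball x r |x r. x \<in> M}"
    using balls by blast
  ultimately show ?thesis
    unfolding admissible_def by blast
qed

lemma admissible_mspace: "admissible M d M"
  unfolding admissible_def by (intro exI[of _ "{}"]) auto

lemma admissible_mcball: "x \<in> M \<Longrightarrow> admissible M d (mcball x r)"
  unfolding admissible_def by (intro exI[of _ "{mcball x r}"]) (auto simp: mcball_subset_mspace)

lemma admissible_Int:
  assumes "admissible M d A" and "admissible M d B"
  shows "admissible M d (A \<inter> B)"
proof -
  have "A \<inter> B = M \<inter> \<Inter>{A, B}"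
    using admissible_subset[OF assms(1)] by blast
  then show ?thesis
    using admissible_Inter[of "{A, B}"] assms by auto
qed

lemma mem_Bset_iff: "A \<subseteq> M \<Longrightarrow> y \<in> Bset M d A r \<longleftrightarrow> y \<in> M \<and> (\<forall>a\<in>A. d a y \<le> r)"
  unfolding Bset_def by auto

lemma admissible_Bset:
  assumes "A \<subseteq> M"
  shows "admissible M d (Bset M d A r)"
proof -
  have "Bset M d A r = M \<inter> \<Inter>((\<lambda>x. mcball x r) ` A)"
    unfolding Bset_def by blast
  then show ?thesis
    using admissible_Inter[of "(\<lambda>x. mcball x r) ` A"] admissible_mcball assms by auto
qed

lemma Bset_antimono: "A \<subseteq> B \<Longrightarrow> Bset M d B r \<subseteq> Bset M d A r"
  unfolding Bset_def by auto

lemma Bset_mono_radius: "r \<le> s \<Longrightarrow> Bset M d A r \<subseteq> Bset M d A s"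
  unfolding Bset_def by auto

lemma Bset_subset_Bset_add:
  assumes "A \<subseteq> M" and "B \<noteq> {}" and "\<And>a b. a \<in> A \<Longrightarrow> b \<in> B \<Longrightarrow> d a b \<le> e"
  shows "Bset M d B r \<subseteq> Bset M d A (e + r)"
proof
  fix x assume x: "x \<in> Bset M d B r"
  obtain b where b: "b \<in> B" using assms(2) by blast
  have "d a x \<le> e + r" if a: "a \<in> A" for a
  proof -
    have "b \<in> M" and "x \<in> M" and "d b x \<le> r"
      using x b unfolding Bset_def by auto
    then have "d a x \<le> d a b + d b x"
      using triangle a assms(1) by blast
    then show ?thesis using assms(3)[OF a b] \<open>d b x \<le> r\<close> by linarith
  qed
  then show "x \<in> Bset M d A (e + r)"
    using x assms(1) unfolding Bset_def by auto
qed

lemma admissible_compact_chain: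
  assumes "admissible_compact M d" and "\<C> \<noteq> {}" and "chain\<^sub>\<subseteq> \<C>"
    and "\<And>A. A \<in> \<C> \<Longrightarrow> admissible M d A \<and> A \<noteq> {}"
  shows "M \<inter> \<Inter>\<C> \<noteq> {}"
proof -
  have "M \<inter> \<Inter>\<G> \<noteq> {}" if "finite \<G>" and "\<G> \<subseteq> \<C>" for \<G>
  proof (cases "\<G> = {}")
    case True
    obtain A where "A \<in> \<C>" using assms(2) by blast
    then have "A \<subseteq> M" and "A \<noteq> {}" using assms(4) admissible_subset by auto
    then show ?thesis using True by auto
  next
    case False
    have "subset.chain UNIV \<G>"
      using assms(3) \<open>\<G> \<subseteq> \<C>\<close> by (auto simp: subset.chain_def chain_subset_def)
    then have "\<Inter>\<G> \<in> \<G>"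
      using Inter_in_chain \<open>finite \<G>\<close> False by blast
    then have "\<Inter>\<G> \<subseteq> M" and "\<Inter>\<G> \<noteq> {}"
      using assms(4) admissible_subset \<open>\<G> \<subseteq> \<C>\<close> by auto
    then show ?thesis by auto
  qed
  moreover have "\<C> \<subseteq> Collect (admissible M d)"
    using assms(4) by auto
  ultimately show ?thesis
    using assms(1) unfolding admissible_compact_def by simp
qed

lemma Bset_sequence_common_point:
  assumes "admissible_compact M d" and "0 \<le> c" and "0 \<le> q" and "q < 1"
    and "\<And>n. K n \<subseteq> M" and "\<And>n. K n \<noteq> {}"
    and "\<And>n. K (Suc n) \<subseteq> Bset M d (K n) (c * q ^ n)"
  obtains x where "x \<in> M" and "\<And>n. x \<in> Bset M d (K n) (c * q ^ n / (1 - q))"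
proof -
  define W where "W n = Bset M d (K n) (c * q ^ n / (1 - q))" for n
  have radius_Suc: "c * q ^ n / (1 - q) = c * q ^ n + c * q ^ Suc n / (1 - q)" for n
    using assms(4) by (simp add: field_simps)
  have radius_nonneg: "0 \<le> c * q ^ n / (1 - q)" for n
    using assms(2-4) by simp
  have K_Suc_W: "K (Suc n) \<subseteq> W n" for n
  proof -
    have "K (Suc n) \<subseteq> Bset M d (K n) (c * q ^ n)"
      by (rule assms(7))
    also have "\<dots> \<subseteq> W n"
      unfolding W_def using radius_Suc[of n] radius_nonneg[of "Suc n"]
      by (intro Bset_mono_radius) linarith
    finally show ?thesis .
  qed
  have "W (Suc n) \<subseteq> W n" for n
  proof -
    have "d a b \<le> c * q ^ n" if "a \<in> K n" and "b \<in> K (Suc n)" for a b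
      using assms(7)[of n] that unfolding Bset_def by auto
    then show ?thesis
      unfolding W_def radius_Suc[of n]
      by (intro Bset_subset_Bset_add) (use assms(5,6) in auto)
  qed
  then have "decseq W"
    by (rule decseq_SucI)
  then have "chain\<^sub>\<subseteq> (range W)"
    by (rule decseq_chain_subset_range)
  moreover have "admissible M d (W n)" for n
    unfolding W_def by (rule admissible_Bset[OF assms(5)])
  moreover have "W n \<noteq> {}" for n
    using K_Suc_W[of n] assms(6)[of "Suc n"] by blast
  ultimately have "M \<inter> \<Inter>(range W) \<noteq> {}"
    by (intro admissible_compact_chain[OF assms(1)]) auto
  then obtain x where "x \<in> M" and "\<And>n. x \<in> W n" by blast
  then show ?thesis
    by (intro that) (auto simp: W_def)
qed

end

locale interlaced_family = Metric_space M d for M and d :: "'a \<Rightarrow> 'a \<Rightarrow> real" +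
  fixes F :: "('a \<Rightarrow> 'a) set"
  assumes family_nonempty: "F \<noteq> {}"
    and interlaced: "interlaced_orbit_nonexpansive M d F"
begin

definition invariant :: "'a set \<Rightarrow> bool"
  where "invariant A \<longleftrightarrow> (\<forall>T\<in>F. T ` A \<subseteq> A)"

text \<open>\<open>K\<close> is contained in the admissible hull of \<open>\<Union>S\<in>F. S ` K\<close>, i.e. in every closed ball
  centred in \<open>M\<close> that contains all the images.\<close>
definition spanned_by_images :: "'a set \<Rightarrow> bool"
  where "spanned_by_images K \<longleftrightarrow>
    (\<forall>w\<in>M. \<forall>r. (\<forall>S\<in>F. \<forall>y\<in>K. d w (S y) \<le> r) \<longrightarrow> (\<forall>x\<in>K. d w x \<le> r))"

definition spanned_invariant :: "'a set \<Rightarrow> bool"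
  where "spanned_invariant K \<longleftrightarrow>
    K \<noteq> {} \<and> admissible M d K \<and> invariant K \<and> spanned_by_images K"

definition centred_invariant :: "real \<Rightarrow> 'a set \<Rightarrow> bool"
  where "centred_invariant s D \<longleftrightarrow>
    admissible M d D \<and> invariant D \<and> D \<inter> Bset M d D s \<noteq> {}"

definition image_hull :: "'a set \<Rightarrow> 'a set"
  where "image_hull D =
    M \<inter> \<Inter>(insert D {mcball w r |w r. w \<in> M \<and> (\<forall>S\<in>F. \<forall>y\<in>D. d w (S y) \<le> r)})"

lemma maps_into: "T \<in> F \<Longrightarrow> x \<in> M \<Longrightarrow> T x \<in> M"
  using interlaced[unfolded interlaced_orbit_nonexpansive_def, THEN conjunct1] by blast

lemma invariant_mspace: "invariant M"
  unfolding invariant_def using maps_into by blast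

lemma invariant_Int: "invariant A \<Longrightarrow> invariant B \<Longrightarrow> invariant (A \<inter> B)"
  unfolding invariant_def by blast

lemma invariant_Inter: "(\<And>A. A \<in> \<A> \<Longrightarrow> invariant A) \<Longrightarrow> invariant (M \<inter> \<Inter>\<A>)"
  unfolding invariant_def using maps_into by blast

lemma dist_images_le:
  assumes "T \<in> F" and "S \<in> F" and "x \<in> M" and "A \<subseteq> M" and "invariant A" and "y \<in> A"
    and "\<And>a. a \<in> A \<Longrightarrow> d x a \<le> r"
  shows "d (T x) (S y) \<le> r"
proof -
  have "y \<in> M"
    using assms(4,6) by blast
  then have "d (T x) (S y) \<le> (SUP R\<in>F. Dsup d x (orbit R y))"
    by (rule interlaced[unfolded interlaced_orbit_nonexpansive_def, THEN conjunct2, rule_format,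
          OF assms(1-3)])
  also have "\<dots> \<le> r"
  proof (rule cSUP_least[OF family_nonempty])
    fix R assume "R \<in> F"
    then have "R ` A \<subseteq> A"
      using assms(5) unfolding invariant_def by blast
    then have "orbit R y \<subseteq> A"
      using assms(6) by (rule orbit_subset)
    moreover have "orbit R y \<noteq> {}"
      by (simp add: orbit_def)
    ultimately show "Dsup d x (orbit R y) \<le> r"
      unfolding Dsup_def using assms(7) by (intro cSUP_least) auto
  qed
  finally show ?thesis .
qed

lemma invariant_Bset:
  assumes "spanned_by_images K" and "invariant K" and "K \<subseteq> M"
  shows "invariant (Bset M d K r)"
  unfolding invariant_def
proof (intro ballI image_subsetI)
  fix T x assume T: "T \<in> F" and x: "x \<in> Bset M d K r"
  then have "x \<in> M" and "\<And>a. a \<in> K \<Longrightarrow> d x a \<le> r"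
    using assms(3) commute by (auto simp: mem_Bset_iff)
  then have "\<forall>S\<in>F. \<forall>y\<in>K. d (T x) (S y) \<le> r"
    using dist_images_le[OF T _ _ assms(3,2)] by blast
  then have "\<forall>a\<in>K. d (T x) a \<le> r"
    using assms(1) maps_into[OF T \<open>x \<in> M\<close>] unfolding spanned_by_images_def by blast
  then show "T x \<in> Bset M d K r"
    using assms(3) maps_into[OF T \<open>x \<in> M\<close>] commute by (auto simp: mem_Bset_iff)
qed

lemma diam_d_pos_if_no_fixed_point:
  assumes "mbounded M" and "K \<subseteq> M" and "K \<noteq> {}" and "invariant K"
    and "\<not> (\<exists>x\<in>K. \<forall>T\<in>F. T x = x)"
  shows "0 < diam_d d K"
proof -
  obtain x T where "x \<in> K" and "T \<in> F" and "T x \<noteq> x"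
    using assms(3,5) by blast
  moreover have "T x \<in> K"
    using assms(4) \<open>x \<in> K\<close> \<open>T \<in> F\<close> unfolding invariant_def by blast
  ultimately have "0 < d x (T x)" and "d x (T x) \<le> diam_d d K"
    using assms(1,2) diam_d_ge mbounded_subset by (auto simp: subset_iff)
  then show ?thesis by linarith
qed

lemma image_hull_subset: "image_hull D \<subseteq> D"
  unfolding image_hull_def by blast

lemma image_in_image_hull:
  assumes "invariant D" and "D \<subseteq> M" and "T \<in> F" and "x \<in> D"
  shows "T x \<in> image_hull D"
proof -
  have "T x \<in> D"
    using assms(1,3,4) unfolding invariant_def by blast
  moreover have "T x \<in> mcball w r" if "w \<in> M" and "\<forall>S\<in>F. \<forall>y\<in>D. d w (S y) \<le> r" for w r
    using that assms(3,4) \<open>T x \<in> D\<close> assms(2) by auto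
  ultimately show ?thesis
    unfolding image_hull_def using assms(2) by blast
qed

lemma spanned_by_images_if_subset_image_hull:
  assumes "D \<subseteq> image_hull D"
  shows "spanned_by_images D"
  unfolding spanned_by_images_def
proof (intro ballI allI impI)
  fix w r x assume "w \<in> M" and "\<forall>S\<in>F. \<forall>y\<in>D. d w (S y) \<le> r" and "x \<in> D"
  then have "x \<in> mcball w r"
    using assms unfolding image_hull_def by blast
  then show "d w x \<le> r"
    by simp
qed

text \<open>The image of a centre of \<open>D\<close> is a centre of \<open>image_hull D\<close>.\<close>
lemma centred_invariant_image_hull:
  assumes "centred_invariant s D"
  shows "centred_invariant s (image_hull D)"
proof -
  have adm: "admissible M d D" and inv: "invariant D" and "D \<inter> Bset M d D s \<noteq> {}"
    using assms unfolding centred_invariant_def by blast+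
  have DM: "D \<subseteq> M"
    using adm by (rule admissible_subset)
  have "admissible M d (image_hull D)"
    unfolding image_hull_def using adm admissible_mcball by (intro admissible_Inter) auto
  moreover have "invariant (image_hull D)"
    unfolding invariant_def using image_in_image_hull[OF inv DM] image_hull_subset by blast
  moreover have "image_hull D \<inter> Bset M d (image_hull D) s \<noteq> {}"
  proof -
    obtain x where x: "x \<in> D" "x \<in> Bset M d D s"
      using \<open>D \<inter> Bset M d D s \<noteq> {}\<close> by blast
    obtain T where T: "T \<in> F"
      using family_nonempty by blast
    have "x \<in> M" and "\<And>a. a \<in> D \<Longrightarrow> d x a \<le> s"
      using x DM commute by (auto simp: mem_Bset_iff)
    then have "\<forall>S\<in>F. \<forall>y\<in>D. d (T x) (S y) \<le> s"
      using dist_images_le[OF T _ _ DM inv] by blast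
    then have "image_hull D \<subseteq> mcball (T x) s"
      unfolding image_hull_def using maps_into[OF T \<open>x \<in> M\<close>] by blast
    moreover have "image_hull D \<subseteq> M"
      unfolding image_hull_def by blast
    ultimately have "T x \<in> Bset M d (image_hull D) s"
      using maps_into[OF T \<open>x \<in> M\<close>] commute by (auto simp: mem_Bset_iff)
    then show ?thesis
      using image_in_image_hull[OF inv DM T \<open>x \<in> D\<close>] by blast
  qed
  ultimately show ?thesis
    unfolding centred_invariant_def by blast
qed

lemma centred_invariant_centres:
  assumes "centred_invariant s D" and "spanned_by_images D"
  shows "centred_invariant s (D \<inter> Bset M d D s)"
proof -
  have "admissible M d D" and "invariant D" and "D \<inter> Bset M d D s \<noteq> {}"
    using assms(1) unfolding centred_invariant_def by blast+
  then have DM: "D \<subseteq> M"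
    by (simp add: admissible_subset)
  have "admissible M d (D \<inter> Bset M d D s)"
    using \<open>admissible M d D\<close> admissible_Bset[OF DM] by (rule admissible_Int)
  moreover have "invariant (D \<inter> Bset M d D s)"
    using \<open>invariant D\<close> invariant_Bset[OF assms(2) \<open>invariant D\<close> DM] by (rule invariant_Int)
  moreover have "D \<inter> Bset M d D s \<subseteq> Bset M d (D \<inter> Bset M d D s) s"
    using DM unfolding Bset_def by auto
  ultimately show ?thesis
    unfolding centred_invariant_def using \<open>D \<inter> Bset M d D s \<noteq> {}\<close> by blast
qed

end

locale compact_interlaced_family = interlaced_family +
  assumes admissible_compact: "admissible_compact M d"
begin

lemma centred_invariant_chain_Inter:
  assumes "\<C> \<noteq> {}" and "chain\<^sub>\<subseteq> \<C>" and "\<And>A. A \<in> \<C> \<Longrightarrow> centred_invariant s A"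
  shows "centred_invariant s (M \<inter> \<Inter>\<C>)"
proof -
  define D where "D = M \<inter> \<Inter>\<C>"
  have adm: "admissible M d A" and centre: "A \<inter> Bset M d A s \<noteq> {}" if "A \<in> \<C>" for A
    using assms(3)[OF that] unfolding centred_invariant_def by blast+
  have "D \<subseteq> M"
    unfolding D_def by blast
  have "admissible M d D"
    unfolding D_def using adm by (rule admissible_Inter)
  moreover have "invariant D"
    unfolding D_def using assms(3) by (intro invariant_Inter) (simp add: centred_invariant_def)
  moreover have "D \<inter> Bset M d D s \<noteq> {}"
  proof -
    let ?\<C> = "(\<lambda>A. A \<inter> Bset M d D s) ` \<C>"
    have "M \<inter> \<Inter>?\<C> \<noteq> {}"
    proof (rule admissible_compact_chain[OF admissible_compact])
      show "?\<C> \<noteq> {}"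
        using assms(1) by blast
      show "chain\<^sub>\<subseteq> ?\<C>"
        using assms(2) unfolding chain_subset_def by blast
    next
      fix A' assume "A' \<in> ?\<C>"
      then obtain A where A: "A \<in> \<C>" and A': "A' = A \<inter> Bset M d D s" by blast
      have "D \<subseteq> A"
        unfolding D_def using A by blast
      then have "A \<inter> Bset M d A s \<subseteq> A'"
        unfolding A' using Bset_antimono by blast
      then show "admissible M d A' \<and> A' \<noteq> {}"
        unfolding A' using admissible_Int[OF adm[OF A] admissible_Bset[OF \<open>D \<subseteq> M\<close>]] centre[OF A]
        by blast
    qed
    moreover have "M \<inter> \<Inter>?\<C> \<subseteq> D \<inter> Bset M d D s"
      unfolding D_def using assms(1) by blast
    ultimately show ?thesis by blast
  qed
  ultimately show ?thesis
    unfolding centred_invariant_def D_def by blast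
qed

lemma exists_minimal_centred_invariant:
  assumes "centred_invariant s X"
  obtains D where "D \<subseteq> X" and "centred_invariant s D"
    and "\<And>D'. D' \<subseteq> D \<Longrightarrow> centred_invariant s D' \<Longrightarrow> D' = D"
proof -
  let ?P = "{D. D \<subseteq> X \<and> centred_invariant s D}"
  have "\<exists>D\<in>?P. \<forall>D'\<in>?P. D' \<subseteq> D \<longrightarrow> D' = D"
  proof (rule subset_Zorn_minimal)
    show "?P \<noteq> {}"
      using assms by blast
  next
    fix \<C> assume "\<C> \<subseteq> ?P" and "\<C> \<noteq> {}" and "chain\<^sub>\<subseteq> \<C>"
    then have "centred_invariant s (M \<inter> \<Inter>\<C>)"
      by (intro centred_invariant_chain_Inter) auto
    moreover obtain A where "A \<in> \<C>"
      using \<open>\<C> \<noteq> {}\<close> by blast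
    then have "M \<inter> \<Inter>\<C> \<subseteq> X"
      using \<open>\<C> \<subseteq> ?P\<close> by blast
    ultimately show "\<exists>L\<in>?P. \<forall>D\<in>\<C>. L \<subseteq> D"
      by (intro bexI[of _ "M \<inter> \<Inter>\<C>"]) auto
  qed
  then obtain D where "D \<subseteq> X" and "centred_invariant s D"
    and minimal: "\<And>D'. D' \<in> ?P \<Longrightarrow> D' \<subseteq> D \<Longrightarrow> D' = D"
    by blast
  show ?thesis
  proof (rule that)
    fix D' assume "D' \<subseteq> D" and "centred_invariant s D'"
    then show "D' = D"
      using \<open>D \<subseteq> X\<close> by (intro minimal) auto
  qed fact+
qed

lemma minimal_centred_invariant_spanned:
  assumes "centred_invariant s D"
    and minimal: "\<And>D'. D' \<subseteq> D \<Longrightarrow> centred_invariant s D' \<Longrightarrow> D' = D"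
  shows "spanned_by_images D"
proof -
  have "image_hull D = D"
    using image_hull_subset centred_invariant_image_hull[OF assms(1)] by (rule minimal)
  then show ?thesis
    by (intro spanned_by_images_if_subset_image_hull) simp
qed

lemma exists_spanned_centred_invariant:
  assumes "centred_invariant s X"
  obtains D where "D \<subseteq> X" and "centred_invariant s D" and "spanned_by_images D"
proof -
  obtain D where D: "D \<subseteq> X" "centred_invariant s D"
    and minimal: "\<And>D'. D' \<subseteq> D \<Longrightarrow> centred_invariant s D' \<Longrightarrow> D' = D"
    using exists_minimal_centred_invariant[OF assms] by blast
  have "spanned_by_images D"
    using D(2) minimal by (rule minimal_centred_invariant_spanned)
  with D show thesis
    by (rule that)
qed

lemma spanned_invariant_if_centred:
  "centred_invariant s D \<Longrightarrow> spanned_by_images D \<Longrightarrow> spanned_invariant D"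
  unfolding centred_invariant_def spanned_invariant_def by blast

lemma shrinking_step:
  assumes "URNS M d p q" and K: "spanned_invariant K" and "0 < diam_d d K"
  obtains K' where "spanned_invariant K'" and "diam_d d K' \<le> q * diam_d d K"
    and "K' \<subseteq> Bset M d K (p * diam_d d K)"
proof -
  define \<delta> where "\<delta> = diam_d d K"
  define C where "C = Bset M d K (p * \<delta>)"
  have "admissible M d K" and "invariant K" and "spanned_by_images K"
    using K unfolding spanned_invariant_def by blast+
  then have KM: "K \<subseteq> M"
    by (simp add: admissible_subset)
  have "C \<inter> Bset M d C (q * \<delta>) \<noteq> {}"
    using assms(1)[unfolded URNS_def, rule_format, OF conjI, OF \<open>admissible M d K\<close> assms(3)]
    unfolding C_def \<delta>_def .
  then have "centred_invariant (q * \<delta>) C"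
    unfolding centred_invariant_def C_def
    using admissible_Bset[OF KM] invariant_Bset[OF \<open>spanned_by_images K\<close> \<open>invariant K\<close> KM]
    by blast
  then obtain D where "D \<subseteq> C" and "centred_invariant (q * \<delta>) D" and "spanned_by_images D"
    by (rule exists_spanned_centred_invariant)
  define E where "E = D \<inter> Bset M d D (q * \<delta>)"
  have "centred_invariant (q * \<delta>) E"
    unfolding E_def by (rule centred_invariant_centres) fact+
  then obtain K' where "K' \<subseteq> E" and K': "centred_invariant (q * \<delta>) K'" and "spanned_by_images K'"
    by (rule exists_spanned_centred_invariant)
  show thesis
  proof (rule that)
    show "spanned_invariant K'"
      using K' \<open>spanned_by_images K'\<close> by (rule spanned_invariant_if_centred)
    then have "K' \<noteq> {}"
      unfolding spanned_invariant_def by blast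
    moreover have "d a b \<le> q * \<delta>" if "a \<in> K'" and "b \<in> K'" for a b
    proof -
      have "a \<in> D" and "b \<in> Bset M d D (q * \<delta>)"
        using that \<open>K' \<subseteq> E\<close> unfolding E_def by auto
      then show ?thesis
        unfolding Bset_def by auto
    qed
    ultimately show "diam_d d K' \<le> q * diam_d d K"
      unfolding \<delta>_def[symmetric] by (rule diam_d_le)
    show "K' \<subseteq> Bset M d K (p * diam_d d K)"
      using \<open>K' \<subseteq> E\<close> \<open>D \<subseteq> C\<close> unfolding E_def C_def \<delta>_def by blast
  qed
qed

lemma shrinking_sequence:
  assumes "URNS M d p q" and "0 < p" and "0 < q"
    and diam_pos: "\<And>K. spanned_invariant K \<Longrightarrow> 0 < diam_d d K"
    and "spanned_invariant K0"
  obtains K where "\<And>n. spanned_invariant (K n)"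
    and "\<And>n. K (Suc n) \<subseteq> Bset M d (K n) (p * diam_d d K0 * q ^ n)"
proof -
  have "\<exists>K'. spanned_invariant K' \<and> diam_d d K' \<le> q * diam_d d K \<and>
      K' \<subseteq> Bset M d K (p * diam_d d K)" if "spanned_invariant K" for K
    using shrinking_step[OF assms(1) that diam_pos[OF that]] by blast
  then obtain shrink where shrink: "\<And>K. spanned_invariant K \<Longrightarrow> spanned_invariant (shrink K) \<and>
      diam_d d (shrink K) \<le> q * diam_d d K \<and> shrink K \<subseteq> Bset M d K (p * diam_d d K)"
    by metis
  define K where "K n = (shrink ^^ n) K0" for n
  have K_Suc: "K (Suc n) = shrink (K n)" for n
    by (simp add: K_def)
  have K: "spanned_invariant (K n)" for n
    by (induction n) (use assms(5) shrink in \<open>simp_all add: K_def\<close>)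
  have diam: "diam_d d (K n) \<le> diam_d d K0 * q ^ n" for n
  proof (induction n)
    case 0
    then show ?case by (simp add: K_def)
  next
    case (Suc n)
    have "diam_d d (K (Suc n)) \<le> q * diam_d d (K n)"
      using shrink[OF K] K_Suc by simp
    also have "\<dots> \<le> q * (diam_d d K0 * q ^ n)"
      using Suc assms(3) by (intro mult_left_mono) auto
    finally show ?case
      by (simp add: mult_ac)
  qed
  have "K (Suc n) \<subseteq> Bset M d (K n) (p * diam_d d K0 * q ^ n)" for n
  proof -
    have "K (Suc n) \<subseteq> Bset M d (K n) (p * diam_d d (K n))"
      using shrink[OF K] K_Suc by simp
    also have "\<dots> \<subseteq> Bset M d (K n) (p * diam_d d K0 * q ^ n)"
      using diam[of n] assms(2) by (intro Bset_mono_radius) (simp add: mult.assoc)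
    finally show ?thesis .
  qed
  with K show thesis
    by (rule that)
qed

lemma common_fixed_point_of_shrinking_sequence:
  assumes K: "\<And>n. spanned_invariant (K n)"
    and "\<And>n. K (Suc n) \<subseteq> Bset M d (K n) (c * q ^ n)"
    and "0 \<le> c" and "0 \<le> q" and "q < 1"
  shows "\<exists>x\<in>M. \<forall>T\<in>F. T x = x"
proof -
  define \<rho> where "\<rho> n = c * q ^ n / (1 - q)" for n
  have KM: "K n \<subseteq> M" and "K n \<noteq> {}" and "invariant (K n)" and "spanned_by_images (K n)" for n
    using K[of n] admissible_subset unfolding spanned_invariant_def by blast+
  obtain x where "x \<in> M" and x: "\<And>n. x \<in> Bset M d (K n) (\<rho> n)"
    unfolding \<rho>_def
    using Bset_sequence_common_point[OF admissible_compact assms(3-5) KM \<open>\<And>n. K n \<noteq> {}\<close> assms(2)]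
    by blast
  have "T x = x" if T: "T \<in> F" for T
  proof -
    have Tx: "T x \<in> Bset M d (K n) (\<rho> n)" for n
      using invariant_Bset[OF \<open>spanned_by_images (K n)\<close> \<open>invariant (K n)\<close> KM] x T
      unfolding invariant_def by blast
    have "d x (T x) \<le> 2 * \<rho> n" for n
    proof -
      obtain a where "a \<in> K n"
        using \<open>K n \<noteq> {}\<close> by blast
      then have "d a x \<le> \<rho> n" and "d a (T x) \<le> \<rho> n" and "a \<in> M"
        using x[of n] Tx[of n] KM unfolding Bset_def by auto
      moreover have "d x (T x) \<le> d x a + d a (T x)"
        using triangle \<open>x \<in> M\<close> \<open>a \<in> M\<close> maps_into[OF T \<open>x \<in> M\<close>] by blast
      ultimately show ?thesis
        using commute[of x a] by linarith
    qed
    moreover have "(\<lambda>n. 2 * \<rho> n) \<longlonglongrightarrow> 2 * (c * 0 / (1 - q))"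
      unfolding \<rho>_def using assms(4,5) by (intro tendsto_intros LIMSEQ_power_zero) auto
    ultimately have "d x (T x) \<le> 2 * (c * 0 / (1 - q))"
      by (intro LIMSEQ_le_const[where X="\<lambda>n. 2 * \<rho> n"]) auto
    then show "T x = x"
      using zero[OF \<open>x \<in> M\<close> maps_into[OF T \<open>x \<in> M\<close>]] nonneg[of x "T x"] by simp
  qed
  then show ?thesis
    using \<open>x \<in> M\<close> by blast
qed

lemma common_fixed_point:
  assumes "M \<noteq> {}" and "mbounded M" and "URNS M d p q" and "0 < p" and "0 < q" and "q < 1"
  shows "\<exists>x\<in>M. \<forall>T\<in>F. T x = x"
proof (rule ccontr)
  assume no_fixed: "\<not> (\<exists>x\<in>M. \<forall>T\<in>F. T x = x)"
  have diam_pos: "0 < diam_d d K" if "spanned_invariant K" for K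
  proof -
    have "K \<subseteq> M" and "K \<noteq> {}" and "invariant K"
      using that admissible_subset unfolding spanned_invariant_def by blast+
    moreover have "\<not> (\<exists>x\<in>K. \<forall>T\<in>F. T x = x)"
      using no_fixed \<open>K \<subseteq> M\<close> by blast
    ultimately show ?thesis
      by (rule diam_d_pos_if_no_fixed_point[OF assms(2)])
  qed
  obtain B where "\<forall>x\<in>M. \<forall>y\<in>M. d x y \<le> B"
    using assms(2) unfolding mbounded_alt by blast
  then have "M \<subseteq> Bset M d M B"
    by (auto simp: mem_Bset_iff)
  then have "centred_invariant B M"
    unfolding centred_invariant_def using admissible_mspace invariant_mspace assms(1) by blast
  then obtain K0 where "centred_invariant B K0" and "spanned_by_images K0"
    by (rule exists_spanned_centred_invariant)
  then have K0: "spanned_invariant K0"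
    by (rule spanned_invariant_if_centred)
  obtain K where "\<And>n. spanned_invariant (K n)"
    and "\<And>n. K (Suc n) \<subseteq> Bset M d (K n) (p * diam_d d K0 * q ^ n)"
    using shrinking_sequence[OF assms(3-5) diam_pos K0] by blast
  moreover have "0 \<le> p * diam_d d K0"
    using assms(4) diam_pos[OF K0] by simp
  ultimately show False
    using common_fixed_point_of_shrinking_sequence assms(5,6) no_fixed by fastforce
qed

end

theorem theorem4p5:
  fixes M :: "'a set" and d :: "'a \<Rightarrow> 'a \<Rightarrow> real"
    and p q :: real and F :: "('a \<Rightarrow> 'a) set"
  assumes "Metric_space M d"
    and "M \<noteq> {}"
    and "Metric_space.mbounded M d M"
    and "p > 0" and "0 < q" and "q < 1"
    and "URNS M d p q"
    and "admissible_compact M d"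
    and "interlaced_orbit_nonexpansive M d F"
  shows "\<exists>x\<in>M. \<forall>T\<in>F. T x = x"
proof (cases "F = {}")
  case True
  then show ?thesis
    using assms(2) by blast
next
  case False
  interpret compact_interlaced_family M d F
    using assms(1,8,9) False
    by (intro compact_interlaced_family.intro interlaced_family.intro interlaced_family_axioms.intro
        compact_interlaced_family_axioms.intro)
  show ?thesis
    using common_fixed_point assms(2-7) by blast
qed

end
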